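(* Let $A$ be a ring and $I\subset A$ an ideal. (1) $A$ is $I$-adically separated (resp. $I$-adically complete) if and only if every $I$-adic Cauchy sequence consisting of elements of $I$ has at most one (resp. exactly one) limit in $I$. (2) Let $B$ be another ring with ideal $J$. If $I\cong J$ as (possibly non-unital) rings, then $A$ is $I$-adically separated (resp. complete) if and only if $B$ is $J$-adically separated (resp. complete).
   Context: Rings are commutative with $1$. "$I$-adically complete" means Hausdorff complete for the $I$-adic topology. An $I$-adic Cauchy sequence in $I$ is a sequence $\{x_n\}$ in $I$ with $x_n\equiv x_m \bmod I^n$ for $n\le m$ (equivalently, Cauchy for the $I$-adic topology). *)

theory Defs
  imports Main
begin

definition is_ideal :: "'a::comm_ring_1 set \<Rightarrow> bool" where
  "is_ideal I \<longleftrightarrow> 0 \<in> I \<and> (\<forall>x\<in>I. \<forall>y\<in>I. x + y \<in> I) \<and> (\<forall>a x. x \<in> I \<longrightarrow> a * x \<in> I)"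

definition ideal_gen :: "'a::comm_ring_1 set \<Rightarrow> 'a set" where
  "ideal_gen S = \<Inter> {J. is_ideal J \<and> S \<subseteq> J}"

text \<open>The n-th power I^n of an ideal: generated by all products of n elements of I
  (I^0 = A).\<close>
definition ideal_pow :: "'a::comm_ring_1 set \<Rightarrow> nat \<Rightarrow> 'a set" where
  "ideal_pow I n = ideal_gen {prod_list xs | xs. length xs = n \<and> set xs \<subseteq> I}"

definition adic_separated :: "'a::comm_ring_1 set \<Rightarrow> bool" where
  "adic_separated I \<longleftrightarrow> (\<Inter>n. ideal_pow I n) = {0}"

text \<open>I-adically (Hausdorff) complete: the canonical map A \<rightarrow> lim A/I^n is bijective.
  Elements of lim A/I^n are compatible systems, represented by sequences y with
  y m - y n \<in> I^n for n \<le> m; injectivity is separatedness, surjectivity says every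
  compatible system comes from an element a with y n - a \<in> I^n for all n.\<close>
definition adic_complete :: "'a::comm_ring_1 set \<Rightarrow> bool" where
  "adic_complete I \<longleftrightarrow> adic_separated I \<and>
     (\<forall>y::nat \<Rightarrow> 'a. (\<forall>n m. n \<le> m \<longrightarrow> y m - y n \<in> ideal_pow I n) \<longrightarrow>
        (\<exists>a. \<forall>n. y n - a \<in> ideal_pow I n))"

definition adic_cauchy :: "'a::comm_ring_1 set \<Rightarrow> (nat \<Rightarrow> 'a) \<Rightarrow> bool" where
  "adic_cauchy I x \<longleftrightarrow> (\<forall>n m. n \<le> m \<longrightarrow> x n - x m \<in> ideal_pow I n)"

definition adic_limit :: "'a::comm_ring_1 set \<Rightarrow> (nat \<Rightarrow> 'a) \<Rightarrow> 'a \<Rightarrow> bool" where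
  "adic_limit I x a \<longleftrightarrow> (\<forall>k. \<exists>N. \<forall>n\<ge>N. x n - a \<in> ideal_pow I k)"

definition nonunital_ring_iso :: "('a::comm_ring_1 \<Rightarrow> 'b::comm_ring_1) \<Rightarrow> 'a set \<Rightarrow> 'b set \<Rightarrow> bool" where
  "nonunital_ring_iso f I J \<longleftrightarrow> bij_betw f I J \<and>
     (\<forall>x\<in>I. \<forall>y\<in>I. f (x + y) = f x + f y \<and> f (x * y) = f x * f y)"

end

theory Submission
  imports Defs
begin

text \<open>For \<open>n \<ge> 1\<close> the power \<open>I\<^sup>n\<close> is the additive subgroup generated by the products of
  \<open>n\<close> elements of \<open>I\<close>, so it only depends on \<open>I\<close> as a non-unital ring, and an isomorphism
  \<open>I \<cong> J\<close> carries \<open>I\<^sup>n\<close> onto \<open>J\<^sup>n\<close>. Separatedness and completeness can be phrased purely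
  inside \<open>I\<close>: an element of \<open>\<Inter>n. I\<^sup>n\<close> lies in \<open>I\<close>, and a compatible system \<open>y\<close> becomes a
  Cauchy sequence in \<open>I\<close> after the shift \<open>y (n + 1) - y 1\<close>. Both properties therefore transfer
  along the isomorphism.\<close>

lemma is_ideal_0: "is_ideal I \<Longrightarrow> 0 \<in> I"
  unfolding is_ideal_def by auto

lemma is_ideal_add: "is_ideal I \<Longrightarrow> x \<in> I \<Longrightarrow> y \<in> I \<Longrightarrow> x + y \<in> I"
  unfolding is_ideal_def by auto

lemma is_ideal_mult_left: "is_ideal I \<Longrightarrow> x \<in> I \<Longrightarrow> a * x \<in> I"
  unfolding is_ideal_def by auto

lemma is_ideal_minus: "is_ideal I \<Longrightarrow> x \<in> I \<Longrightarrow> - x \<in> I"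
  using is_ideal_mult_left[of I x "- 1"] by simp

lemma is_ideal_diff: "is_ideal I \<Longrightarrow> x \<in> I \<Longrightarrow> y \<in> I \<Longrightarrow> x - y \<in> I"
  using is_ideal_add[of I x "- y"] is_ideal_minus[of I y] by simp

lemma is_ideal_diff_commute: "is_ideal I \<Longrightarrow> x - y \<in> I \<longleftrightarrow> y - x \<in> I"
  using is_ideal_minus[of I "x - y"] is_ideal_minus[of I "y - x"] by auto

lemma prod_list_in_ideal:
  assumes "is_ideal I" "set xs \<subseteq> I" "xs \<noteq> []"
  shows "prod_list xs \<in> I"
  using assms(2,3) by (induction xs) (auto intro: is_ideal_mult_left[OF assms(1)]
    simp: mult.commute[of _ "prod_list _"])

lemma is_ideal_ideal_gen: "is_ideal (ideal_gen S)"
  unfolding ideal_gen_def is_ideal_def by blast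

lemma ideal_gen_subset: "S \<subseteq> ideal_gen S"
  unfolding ideal_gen_def by auto

lemma ideal_gen_least: "is_ideal J \<Longrightarrow> S \<subseteq> J \<Longrightarrow> ideal_gen S \<subseteq> J"
  unfolding ideal_gen_def by auto

lemma is_ideal_ideal_pow: "is_ideal (ideal_pow I n)"
  unfolding ideal_pow_def by (rule is_ideal_ideal_gen)

lemma zero_in_ideal_pow: "0 \<in> ideal_pow I n"
  by (rule is_ideal_0[OF is_ideal_ideal_pow])

lemma prod_list_in_ideal_pow: "length xs = n \<Longrightarrow> set xs \<subseteq> I \<Longrightarrow> prod_list xs \<in> ideal_pow I n"
  unfolding ideal_pow_def by (rule subsetD[OF ideal_gen_subset]) blast

lemma ideal_pow_0: "ideal_pow (I :: 'a::comm_ring_1 set) 0 = UNIV"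
proof -
  have "(1::'a) \<in> ideal_pow I 0"
    using prod_list_in_ideal_pow[of "[]" 0 I] by simp
  then show ?thesis
    using is_ideal_mult_left[OF is_ideal_ideal_pow, of 1 I 0] by auto
qed

lemma ideal_pow_1:
  assumes "is_ideal I"
  shows "ideal_pow I 1 = I"
proof
  show "ideal_pow I 1 \<subseteq> I"
    unfolding ideal_pow_def
    by (rule ideal_gen_least[OF assms]) (auto simp: length_Suc_conv)
  show "I \<subseteq> ideal_pow I 1"
    using prod_list_in_ideal_pow[of "[_]" 1 I] by auto
qed

lemma ideal_pow_Suc_subset: "ideal_pow I (Suc n) \<subseteq> ideal_pow I n"
  unfolding ideal_pow_def[of I "Suc n"]
proof (rule ideal_gen_least[OF is_ideal_ideal_pow], safe)
  fix xs :: "'a list"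
  assume "length xs = Suc n" "set xs \<subseteq> I"
  then obtain y ys where "xs = y # ys" "length ys = n" "set ys \<subseteq> I"
    by (cases xs) auto
  then show "prod_list xs \<in> ideal_pow I n"
    using is_ideal_mult_left[OF is_ideal_ideal_pow prod_list_in_ideal_pow] by simp
qed

lemma ideal_pow_antimono: "k \<le> n \<Longrightarrow> ideal_pow I n \<subseteq> ideal_pow I k"
  by (induction n rule: dec_induct) (use ideal_pow_Suc_subset in blast)+

lemma ideal_pow_subset: "is_ideal I \<Longrightarrow> 1 \<le> n \<Longrightarrow> ideal_pow I n \<subseteq> I"
  using ideal_pow_antimono[of 1 n I] ideal_pow_1 by blast

inductive_set prod_span :: "'a::comm_ring_1 set \<Rightarrow> nat \<Rightarrow> 'a set" for I n where
  zero: "0 \<in> prod_span I n"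
| prod_list: "length xs = n \<Longrightarrow> set xs \<subseteq> I \<Longrightarrow> prod_list xs \<in> prod_span I n"
| add: "a \<in> prod_span I n \<Longrightarrow> b \<in> prod_span I n \<Longrightarrow> a + b \<in> prod_span I n"
| minus: "a \<in> prod_span I n \<Longrightarrow> - a \<in> prod_span I n"

lemma prod_span_mult_left:
  assumes "is_ideal I" "1 \<le> n" "a \<in> prod_span I n"
  shows "c * a \<in> prod_span I n"
  using assms(3)
proof induction
  case (prod_list xs)
  then obtain y ys where "xs = y # ys"
    using assms(2) by (cases xs) auto
  with prod_list have "prod_list ((c * y) # ys) \<in> prod_span I n"
    using is_ideal_mult_left[OF assms(1)] by (intro prod_span.prod_list) auto
  then show ?case
    using \<open>xs = y # ys\<close> by (simp add: mult.assoc)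
qed (auto simp: distrib_left intro: prod_span.intros)

lemma ideal_pow_eq_prod_span:
  assumes "is_ideal I" "1 \<le> n"
  shows "ideal_pow I n = prod_span I n"
proof
  have "is_ideal (prod_span I n)"
    unfolding is_ideal_def using prod_span_mult_left[OF assms] by (auto intro: prod_span.intros)
  then show "ideal_pow I n \<subseteq> prod_span I n"
    unfolding ideal_pow_def by (rule ideal_gen_least) (auto intro: prod_span.intros)
  show "prod_span I n \<subseteq> ideal_pow I n"
  proof
    fix a
    assume "a \<in> prod_span I n"
    then show "a \<in> ideal_pow I n"
      by induction (auto intro: prod_list_in_ideal_pow is_ideal_0 is_ideal_add is_ideal_minus
          is_ideal_ideal_pow)
  qed
qed

lemma prod_span_subset: "is_ideal I \<Longrightarrow> 1 \<le> n \<Longrightarrow> prod_span I n \<subseteq> I"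
  using ideal_pow_eq_prod_span[of I n] ideal_pow_subset[of I n] by simp

lemma adic_separated_iff_in_ideal:
  assumes "is_ideal I"
  shows "adic_separated I \<longleftrightarrow> (\<forall>z\<in>I. (\<forall>n. z \<in> ideal_pow I n) \<longrightarrow> z = 0)"
proof -
  have "(\<Inter>n. ideal_pow I n) \<subseteq> I"
    using INT_lower[of 1 UNIV "ideal_pow I"] ideal_pow_1[OF assms] by simp
  then show ?thesis
    unfolding adic_separated_def using zero_in_ideal_pow by auto
qed

lemma adic_limit_diff_in_ideal_pow:
  assumes "adic_limit I x a" "adic_limit I x b"
  shows "a - b \<in> ideal_pow I k"
proof -
  obtain N1 N2 where "\<forall>n\<ge>N1. x n - a \<in> ideal_pow I k" "\<forall>n\<ge>N2. x n - b \<in> ideal_pow I k"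
    using assms unfolding adic_limit_def by meson
  then have "x (max N1 N2) - b \<in> ideal_pow I k" "x (max N1 N2) - a \<in> ideal_pow I k"
    by simp_all
  then have "(x (max N1 N2) - b) - (x (max N1 N2) - a) \<in> ideal_pow I k"
    by (rule is_ideal_diff[OF is_ideal_ideal_pow])
  then show ?thesis
    by simp
qed

lemma adic_cauchy_const: "adic_cauchy I (\<lambda>_. c)"
  unfolding adic_cauchy_def by (simp add: zero_in_ideal_pow)

lemma adic_limit_const_iff: "adic_limit I (\<lambda>_. c) a \<longleftrightarrow> (\<forall>k. c - a \<in> ideal_pow I k)"
  unfolding adic_limit_def by auto

lemma adic_separated_iff_unique_limits:
  assumes "is_ideal I"
  shows "adic_separated I \<longleftrightarrow>
           (\<forall>x. (\<forall>n. x n \<in> I) \<and> adic_cauchy I x \<longrightarrow>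
              (\<forall>a b. a \<in> I \<and> b \<in> I \<and> adic_limit I x a \<and> adic_limit I x b \<longrightarrow> a = b))"
proof
  assume separated: "adic_separated I"
  show "\<forall>x. (\<forall>n. x n \<in> I) \<and> adic_cauchy I x \<longrightarrow>
              (\<forall>a b. a \<in> I \<and> b \<in> I \<and> adic_limit I x a \<and> adic_limit I x b \<longrightarrow> a = b)"
  proof (intro allI impI, elim conjE)
    fix x a b
    assume "a \<in> I" "b \<in> I" "adic_limit I x a" "adic_limit I x b"
    then have "a - b \<in> I" "\<forall>k. a - b \<in> ideal_pow I k"
      using is_ideal_diff[OF assms] adic_limit_diff_in_ideal_pow by blast+
    with separated have "a - b = 0"
      unfolding adic_separated_iff_in_ideal[OF assms] by blast
    then show "a = b"
      by simp
  qed
next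
  assume unique: "\<forall>x. (\<forall>n. x n \<in> I) \<and> adic_cauchy I x \<longrightarrow>
              (\<forall>a b. a \<in> I \<and> b \<in> I \<and> adic_limit I x a \<and> adic_limit I x b \<longrightarrow> a = b)"
  show "adic_separated I"
    unfolding adic_separated_iff_in_ideal[OF assms]
  proof (intro ballI impI)
    fix z
    assume "z \<in> I" "\<forall>n. z \<in> ideal_pow I n"
    then have "adic_limit I (\<lambda>_. 0) z" "adic_limit I (\<lambda>_. 0) 0"
      using is_ideal_minus[OF is_ideal_ideal_pow] by (auto simp: adic_limit_const_iff zero_in_ideal_pow)
    then show "z = 0"
      using unique[rule_format, of "\<lambda>_. 0" z 0] \<open>z \<in> I\<close> is_ideal_0[OF assms]
      by (simp add: adic_cauchy_const)
  qed
qed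

lemma adic_limit_in_ideal:
  assumes "is_ideal I" "\<forall>n. x n \<in> I" "\<forall>n. x n - a \<in> ideal_pow I n"
  shows "a \<in> I"
proof -
  have "x 1 - a \<in> I"
    using assms(3) ideal_pow_1[OF assms(1)] by auto
  then show ?thesis
    using is_ideal_diff[OF assms(1), of "x 1" "x 1 - a"] assms(2) by simp
qed

lemma adic_cauchy_iff_compatible:
  "adic_cauchy I x \<longleftrightarrow> (\<forall>n m. n \<le> m \<longrightarrow> x m - x n \<in> ideal_pow I n)"
  unfolding adic_cauchy_def using is_ideal_diff_commute[OF is_ideal_ideal_pow] by meson

lemma adic_limitI_ideal_pow: "\<forall>n. x n - a \<in> ideal_pow I n \<Longrightarrow> adic_limit I x a"
  unfolding adic_limit_def using ideal_pow_antimono by blast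

lemma compatible_system_converges:
  assumes "is_ideal I"
    and limits: "\<forall>x. (\<forall>n. x n \<in> I) \<and> adic_cauchy I x \<longrightarrow> (\<exists>a. adic_limit I x a)"
    and y: "\<forall>n m. n \<le> m \<longrightarrow> y m - y n \<in> ideal_pow I n"
  shows "\<exists>a. \<forall>n. y n - a \<in> ideal_pow I n"
proof -
  define x where "x n = y (Suc n) - y 1" for n
  have "x m - x n \<in> ideal_pow I n" if "n \<le> m" for n m
  proof -
    have "y (Suc m) - y (Suc n) \<in> ideal_pow I (Suc n)"
      using y that by simp
    then have "y (Suc m) - y (Suc n) \<in> ideal_pow I n"
      using ideal_pow_Suc_subset by blast
    then show ?thesis
      unfolding x_def by simp
  qed
  then have "adic_cauchy I x"
    unfolding adic_cauchy_iff_compatible by blast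
  moreover have "\<forall>n. x n \<in> I"
    unfolding x_def using y ideal_pow_1[OF assms(1)] by auto
  ultimately obtain b where b: "adic_limit I x b"
    using limits by blast
  have "y n - (y 1 + b) \<in> ideal_pow I n" for n
  proof -
    obtain N where "\<forall>m\<ge>N. x m - b \<in> ideal_pow I n"
      using b unfolding adic_limit_def by blast
    then have "x (max N n) - b \<in> ideal_pow I n" "y (Suc (max N n)) - y n \<in> ideal_pow I n"
      using y by simp_all
    then have "(x (max N n) - b) - (y (Suc (max N n)) - y n) \<in> ideal_pow I n"
      by (rule is_ideal_diff[OF is_ideal_ideal_pow])
    then show ?thesis
      unfolding x_def by (simp add: algebra_simps)
  qed
  then show ?thesis
    by blast
qed

lemma adic_complete_iff_ex1_limit:
  assumes "is_ideal I"
  shows "adic_complete I \<longleftrightarrow>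
           (\<forall>x. (\<forall>n. x n \<in> I) \<and> adic_cauchy I x \<longrightarrow> (\<exists>!a. a \<in> I \<and> adic_limit I x a))"
proof
  assume complete: "adic_complete I"
  show "\<forall>x. (\<forall>n. x n \<in> I) \<and> adic_cauchy I x \<longrightarrow> (\<exists>!a. a \<in> I \<and> adic_limit I x a)"
  proof (intro allI impI, elim conjE)
    fix x
    assume x: "\<forall>n. x n \<in> I" "adic_cauchy I x"
    then obtain a where a: "\<forall>n. x n - a \<in> ideal_pow I n"
      using complete unfolding adic_complete_def adic_cauchy_iff_compatible by blast
    have unique: "\<forall>a b. a \<in> I \<and> b \<in> I \<and> adic_limit I x a \<and> adic_limit I x b \<longrightarrow> a = b"
      using complete x unfolding adic_complete_def adic_separated_iff_unique_limits[OF assms] by blast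
    show "\<exists>!a. a \<in> I \<and> adic_limit I x a"
    proof (rule ex1I)
      show "a \<in> I \<and> adic_limit I x a"
        using adic_limit_in_ideal[OF assms x(1) a] adic_limitI_ideal_pow[OF a] by simp
      then show "b \<in> I \<and> adic_limit I x b \<Longrightarrow> b = a" for b
        using unique by blast
    qed
  qed
next
  assume ex1: "\<forall>x. (\<forall>n. x n \<in> I) \<and> adic_cauchy I x \<longrightarrow> (\<exists>!a. a \<in> I \<and> adic_limit I x a)"
  then have "\<exists>a. \<forall>n. y n - a \<in> ideal_pow I n"
    if "\<forall>n m. n \<le> m \<longrightarrow> y m - y n \<in> ideal_pow I n" for y
    using compatible_system_converges[OF assms _ that] by blast
  moreover have "adic_separated I"
    unfolding adic_separated_iff_unique_limits[OF assms] using ex1 by blast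
  ultimately show "adic_complete I"
    unfolding adic_complete_def by blast
qed

lemma ex1_bij_betw_iff:
  assumes "bij_betw f A B"
  shows "(\<exists>!b. b \<in> B \<and> P b) \<longleftrightarrow> (\<exists>!a. a \<in> A \<and> P (f a))"
  using assms unfolding bij_betw_def inj_on_def by blast

lemma all_seq_image_iff:
  fixes f :: "'a \<Rightarrow> 'b" and P :: "(nat \<Rightarrow> 'b) \<Rightarrow> bool"
  assumes "f ` A = B"
  shows "(\<forall>y. (\<forall>n. y n \<in> B) \<longrightarrow> P y) \<longleftrightarrow> (\<forall>x. (\<forall>n. x n \<in> A) \<longrightarrow> P (f \<circ> x))"
proof (intro iffI allI impI)
  fix y :: "nat \<Rightarrow> 'b"
  assume "\<forall>x. (\<forall>n. x n \<in> A) \<longrightarrow> P (f \<circ> x)" "\<forall>n. y n \<in> B"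
  moreover have "f \<circ> (inv_into A f \<circ> y) = y"
    using \<open>\<forall>n. y n \<in> B\<close> assms by (auto simp: f_inv_into_f)
  ultimately show "P y"
    using assms by (metis comp_apply inv_into_into)
qed (use assms in auto)

lemma nonunital_ring_iso_inv_into:
  assumes "is_ideal I" "nonunital_ring_iso f I J"
  shows "nonunital_ring_iso (inv_into I f) J I"
  unfolding nonunital_ring_iso_def
proof (intro conjI ballI)
  have bij: "bij_betw f I J"
    using assms(2) unfolding nonunital_ring_iso_def by blast
  then show "bij_betw (inv_into I f) J I"
    by (rule bij_betw_inv_into)
  fix u v
  assume "u \<in> J" "v \<in> J"
  then obtain x y where xy: "x \<in> I" "y \<in> I" "u = f x" "v = f y"
    using bij by (metis bij_betw_imp_surj_on imageE)
  have inv_f: "z \<in> I \<Longrightarrow> inv_into I f (f z) = z" for z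
    using bij by (simp add: bij_betw_def)
  have "u + v = f (x + y)" "u * v = f (x * y)"
    using assms(2) xy unfolding nonunital_ring_iso_def by simp_all
  then show "inv_into I f (u + v) = inv_into I f u + inv_into I f v"
    and "inv_into I f (u * v) = inv_into I f u * inv_into I f v"
    using xy inv_f is_ideal_add[OF assms(1)] is_ideal_mult_left[OF assms(1)] by simp_all
qed

locale ideal_iso =
  fixes I :: "'a::comm_ring_1 set" and J :: "'b::comm_ring_1 set" and f :: "'a \<Rightarrow> 'b"
  assumes ideal_I: "is_ideal I" and ideal_J: "is_ideal J" and iso: "nonunital_ring_iso f I J"
begin

lemma bij: "bij_betw f I J"
  using iso unfolding nonunital_ring_iso_def by blast

lemma map_add: "x \<in> I \<Longrightarrow> y \<in> I \<Longrightarrow> f (x + y) = f x + f y"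
  using iso unfolding nonunital_ring_iso_def by blast

lemma map_mult: "x \<in> I \<Longrightarrow> y \<in> I \<Longrightarrow> f (x * y) = f x * f y"
  using iso unfolding nonunital_ring_iso_def by blast

lemma map_in: "x \<in> I \<Longrightarrow> f x \<in> J"
  using bij bij_betwE by blast

lemma map_0: "f 0 = 0"
  using map_add[OF is_ideal_0[OF ideal_I] is_ideal_0[OF ideal_I]] by simp

lemma map_minus: "x \<in> I \<Longrightarrow> f (- x) = - f x"
  using map_add[of x "- x"] is_ideal_minus[OF ideal_I] map_0 by (simp add: neg_eq_iff_add_eq_0[symmetric])

lemma map_diff: "x \<in> I \<Longrightarrow> y \<in> I \<Longrightarrow> f (x - y) = f x - f y"
  using map_add[of x "- y"] map_minus[of y] is_ideal_minus[OF ideal_I, of y] by simp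

lemma map_eq_0_iff: "x \<in> I \<Longrightarrow> f x = 0 \<longleftrightarrow> x = 0"
  using bij map_0 is_ideal_0[OF ideal_I] unfolding bij_betw_def inj_on_def by metis

lemma map_prod_list: "set xs \<subseteq> I \<Longrightarrow> xs \<noteq> [] \<Longrightarrow> f (prod_list xs) = prod_list (map f xs)"
proof (induction xs)
  case (Cons y ys)
  then show ?case
    by (cases "ys = []") (auto simp: map_mult prod_list_in_ideal[OF ideal_I])
qed simp

lemma map_prod_span:
  assumes "1 \<le> n" "a \<in> prod_span I n"
  shows "f a \<in> prod_span J n"
  using assms(2)
proof induction
  case zero
  then show ?case by (simp add: map_0 prod_span.zero)
next
  case (prod_list xs)
  then have "prod_list (map f xs) \<in> prod_span J n"
    using map_in by (intro prod_span.prod_list) auto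
  moreover have "xs \<noteq> []"
    using prod_list assms(1) by auto
  ultimately show ?case
    using prod_list by (simp add: map_prod_list)
next
  case (add a b)
  then have "a \<in> I" "b \<in> I"
    using prod_span_subset[OF ideal_I assms(1)] by auto
  with add show ?case
    by (simp add: map_add prod_span.add)
next
  case (minus a)
  then have "a \<in> I"
    using prod_span_subset[OF ideal_I assms(1)] by auto
  with minus show ?case
    by (simp add: map_minus prod_span.minus)
qed

lemma map_ideal_pow: "a \<in> ideal_pow I n \<Longrightarrow> f a \<in> ideal_pow J n"
  using map_prod_span ideal_pow_eq_prod_span[OF ideal_I] ideal_pow_eq_prod_span[OF ideal_J]
  by (cases "n = 0") (auto simp: ideal_pow_0)

lemma inverse: "ideal_iso J I (inv_into I f)"
  using ideal_I ideal_J nonunital_ring_iso_inv_into[OF ideal_I iso] by unfold_locales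

lemma ideal_pow_iff: "a \<in> I \<Longrightarrow> f a \<in> ideal_pow J n \<longleftrightarrow> a \<in> ideal_pow I n"
  using map_ideal_pow ideal_iso.map_ideal_pow[OF inverse, of "f a" n] bij
  by (auto simp: bij_betw_def)

lemma adic_cauchy_iff: "\<forall>n. x n \<in> I \<Longrightarrow> adic_cauchy J (f \<circ> x) \<longleftrightarrow> adic_cauchy I x"
  unfolding adic_cauchy_def by (simp add: map_diff[symmetric] ideal_pow_iff is_ideal_diff[OF ideal_I])

lemma adic_limit_iff:
  "\<forall>n. x n \<in> I \<Longrightarrow> a \<in> I \<Longrightarrow> adic_limit J (f \<circ> x) (f a) \<longleftrightarrow> adic_limit I x a"
  unfolding adic_limit_def by (simp add: map_diff[symmetric] ideal_pow_iff is_ideal_diff[OF ideal_I])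

lemma adic_separated_iff: "adic_separated J \<longleftrightarrow> adic_separated I"
proof -
  have "adic_separated J \<longleftrightarrow> (\<forall>z\<in>I. (\<forall>n. f z \<in> ideal_pow J n) \<longrightarrow> f z = 0)"
    using bij_betw_imp_surj_on[OF bij] unfolding adic_separated_iff_in_ideal[OF ideal_J] by blast
  also have "\<dots> \<longleftrightarrow> adic_separated I"
    unfolding adic_separated_iff_in_ideal[OF ideal_I] by (simp add: ideal_pow_iff map_eq_0_iff)
  finally show ?thesis .
qed

lemma adic_complete_iff: "adic_complete J \<longleftrightarrow> adic_complete I"
proof -
  have "adic_complete J \<longleftrightarrow>
      (\<forall>y. (\<forall>n. y n \<in> J) \<longrightarrow> adic_cauchy J y \<longrightarrow> (\<exists>!b. b \<in> J \<and> adic_limit J y b))"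
    by (simp add: adic_complete_iff_ex1_limit[OF ideal_J] imp_conjL)
  also have "\<dots> \<longleftrightarrow> (\<forall>x. (\<forall>n. x n \<in> I) \<longrightarrow>
      adic_cauchy J (f \<circ> x) \<longrightarrow> (\<exists>!b. b \<in> J \<and> adic_limit J (f \<circ> x) b))"
    by (rule all_seq_image_iff[OF bij_betw_imp_surj_on[OF bij]])
  also have "\<dots> \<longleftrightarrow> (\<forall>x. (\<forall>n. x n \<in> I) \<longrightarrow>
      adic_cauchy I x \<longrightarrow> (\<exists>!a. a \<in> I \<and> adic_limit I x a))"
    by (simp add: adic_cauchy_iff ex1_bij_betw_iff[OF bij] adic_limit_iff cong: conj_cong)
  also have "\<dots> \<longleftrightarrow> adic_complete I"
    by (simp add: adic_complete_iff_ex1_limit[OF ideal_I] imp_conjL)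
  finally show ?thesis .
qed

end

theorem lemma3p9:
  fixes I :: "'a::comm_ring_1 set"
  assumes "is_ideal I"
  shows "(adic_separated I \<longleftrightarrow>
           (\<forall>x. (\<forall>n. x n \<in> I) \<and> adic_cauchy I x \<longrightarrow>
              (\<forall>a b. a \<in> I \<and> b \<in> I \<and> adic_limit I x a \<and> adic_limit I x b \<longrightarrow> a = b)))
       \<and> (adic_complete I \<longleftrightarrow>
           (\<forall>x. (\<forall>n. x n \<in> I) \<and> adic_cauchy I x \<longrightarrow>
              (\<exists>!a. a \<in> I \<and> adic_limit I x a)))
       \<and> (\<forall>(J :: 'b::comm_ring_1 set) f. is_ideal J \<and> nonunital_ring_iso f I J \<longrightarrow>
              (adic_separated I \<longleftrightarrow> adic_separated J) \<and>
              (adic_complete I \<longleftrightarrow> adic_complete J))"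
proof -
  have "(adic_separated I \<longleftrightarrow> adic_separated J) \<and> (adic_complete I \<longleftrightarrow> adic_complete J)"
    if "is_ideal J" "nonunital_ring_iso f I J" for J :: "'b::comm_ring_1 set" and f
  proof -
    interpret ideal_iso I J f
      using assms that by unfold_locales
    show ?thesis
      using adic_separated_iff adic_complete_iff by simp
  qed
  then show ?thesis
    unfolding adic_separated_iff_unique_limits[OF assms, symmetric]
      adic_complete_iff_ex1_limit[OF assms, symmetric]
    by blast
qed

end
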